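(* For every $\alpha\in\mathcal{U}_p(\mu,\nu)$ and every Borel measurable scaling function $v$, one has $\mathrm{dil}_v(\alpha)\in\mathcal{U}_p(\mu,\nu)$ and $\mathcal{H}(\mathrm{dil}_v(\alpha))=\mathcal{H}(\alpha)$. In particular the problem $\mathrm{CGW}$ is invariant to dilations.
   Context: Let $\mathcal{X}=(X,d_X,\mu)$, $\mathcal{Y}=(Y,d_Y,\nu)$ be mm-spaces (complete separable metric spaces with positive finite Borel measures). Fix an entropy $\phi$ (convex lsc $\phi:\mathbb{R}_+\to[0,\infty]$, $\phi(1)=0$), its reverse entropy $\psi(r)=r\phi(1/r)$, $\psi(0)=\phi'_\infty:=\lim_{r\to\infty}\phi(r)/r$, $\psi'_\infty=\phi(0)$, a function $\lambda:\mathbb{R}_+\to\mathbb{R}$, exponents $p,q>0$, and a distance $\Delta$ on $\mathbb{R}_+$. Let $L_c(r,s)=c+\psi(r)+\psi(s)$, $H_c(r,s)=\inf_{\theta\ge0}\theta L_c(r/\theta,s/\theta)$ (value at $\theta=0$ being $\psi'_\infty(r+s)$). Cones $\mathcal{C}[Z]=(Z\times\mathbb{R}_+)/(Z\times\{0\})$ with points $[z,r]$. $\mathcal{D}([a,u],[b,v])^q=H_{\lambda(\Delta(a,b))}(u^p,v^p)$ on $\mathcal{C}[\mathbb{R}_+]$. $\mathcal{U}_p(\mu,\nu)$ is the set of $\alpha\in\mathcal{M}_+(\mathcal{C}[X]\times\mathcal{C}[Y])$ with $\int\xi(x)r^p\,d\alpha([x,r],[y,s])=\int\xi\,d\mu$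 and $\int\zeta(y)s^p\,d\alpha([x,r],[y,s])=\int\zeta\,d\nu$ for all continuous bounded $\xi,\zeta$. $\mathcal{H}(\alpha)=\int\mathcal{D}([d_X(x,x'),rr'],[d_Y(y,y'),ss'])^q\,d\alpha([x,r],[y,s])\,d\alpha([x',r'],[y',s'])$, $\mathrm{CGW}=\inf_{\mathcal{U}_p(\mu,\nu)}\mathcal{H}$. Dilation: for a Borel measurable scaling function $v:\mathcal{C}[X]\times\mathcal{C}[Y]\to(0,\infty)$, with $w=v([x,r],[y,s])$ and $h_v([x,r],[y,s])=([x,r/w],[y,s/w])$, set $\mathrm{dil}_v(\alpha)=(h_v)_\sharp(v^p\alpha)$, i.e. $\int\xi\,d\,\mathrm{dil}_v(\alpha)=\int\xi([x,r/w],[y,s/w])\,w^p\,d\alpha$ for all test functions $\xi$. *)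

theory Defs
  imports "HOL-Analysis.Analysis"
begin

(* The underlying complete separable metric space is a type of class polish_space,
   with d_X = dist; mu is a finite (nonnegative) Borel measure on it. *)
definition mm_measure :: "'a::polish_space measure \<Rightarrow> bool" where
  "mm_measure \<mu> \<longleftrightarrow> sets \<mu> = sets borel \<and> finite_measure \<mu>"

definition entropy :: "(real \<Rightarrow> ereal) \<Rightarrow> bool" where
  "entropy \<phi> \<longleftrightarrow>
     (\<forall>x\<ge>0. \<phi> x \<ge> 0) \<and> \<phi> 1 = 0 \<and>
     (\<forall>x y t. x \<ge> 0 \<longrightarrow> y \<ge> 0 \<longrightarrow> 0 \<le> t \<longrightarrow> t \<le> 1 \<longrightarrow>
        \<phi> (t * x + (1 - t) * y) \<le> ereal t * \<phi> x + ereal (1 - t) * \<phi> y) \<and>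
     (\<forall>x\<ge>0. \<forall>xs. (\<forall>n. xs n \<ge> 0) \<longrightarrow> xs \<longlonglongrightarrow> x \<longrightarrow> \<phi> x \<le> liminf (\<lambda>n. \<phi> (xs n)))"

definition phi_rec :: "(real \<Rightarrow> ereal) \<Rightarrow> ereal" where
  "phi_rec \<phi> = Lim at_top (\<lambda>r. \<phi> r / ereal r)"

definition rev_entropy :: "(real \<Rightarrow> ereal) \<Rightarrow> real \<Rightarrow> ereal" where
  "rev_entropy \<phi> r = (if r = 0 then phi_rec \<phi> else ereal r * \<phi> (1 / r))"

definition Lc :: "(real \<Rightarrow> ereal) \<Rightarrow> real \<Rightarrow> real \<Rightarrow> real \<Rightarrow> ereal" where
  "Lc \<phi> c r s = ereal c + rev_entropy \<phi> r + rev_entropy \<phi> s"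

(* H_c(r,s) = inf_{theta \<ge> 0} theta L_c(r/theta, s/theta), the value at theta = 0 being
   psi'_\<infinity> (r+s) = phi(0) (r+s) *)
definition Hc :: "(real \<Rightarrow> ereal) \<Rightarrow> real \<Rightarrow> real \<Rightarrow> real \<Rightarrow> ereal" where
  "Hc \<phi> c r s = min (\<phi> 0 * ereal (r + s))
                     (INF \<theta>\<in>{0<..}. ereal \<theta> * Lc \<phi> c (r / \<theta>) (s / \<theta>))"

definition distance_on :: "real set \<Rightarrow> (real \<Rightarrow> real \<Rightarrow> real) \<Rightarrow> bool" where
  "distance_on S \<Delta> \<longleftrightarrow>
     (\<forall>a\<in>S. \<forall>b\<in>S. \<Delta> a b \<ge> 0 \<and> (\<Delta> a b = 0 \<longleftrightarrow> a = b) \<and> \<Delta> a b = \<Delta> b a) \<and>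
     (\<forall>a\<in>S. \<forall>b\<in>S. \<forall>c\<in>S. \<Delta> a c \<le> \<Delta> a b + \<Delta> b c)"

definition Dq :: "(real \<Rightarrow> ereal) \<Rightarrow> (real \<Rightarrow> real) \<Rightarrow> (real \<Rightarrow> real \<Rightarrow> real) \<Rightarrow> real
                  \<Rightarrow> real \<Rightarrow> real \<Rightarrow> real \<Rightarrow> real \<Rightarrow> ereal" where
  "Dq \<phi> lam \<Delta> p a u b v = Hc \<phi> (lam (\<Delta> a b)) (u powr p) (v powr p)"

(* ---------- cones ----------
   A point [x,r] of C[X] is represented by the pair (x,r) with r \<ge> 0.
   Measures on C[X] x C[Y] are represented by Borel measures on (X x R) x (Y x R)
   concentrated on {r \<ge> 0, s \<ge> 0}. *)
type_synonym ('a, 'b) conepair = "('a \<times> real) \<times> ('b \<times> real)"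

(* M_+(C[X] x C[Y]) : positive (sigma-finite, cf. Radon) Borel measures on the cone product *)
definition Mplus :: "('a::polish_space, 'b::polish_space) conepair measure \<Rightarrow> bool" where
  "Mplus \<alpha> \<longleftrightarrow> sets \<alpha> = sets borel \<and> sigma_finite_measure \<alpha> \<and>
     (AE z in \<alpha>. snd (fst z) \<ge> 0 \<and> snd (snd z) \<ge> 0)"

definition Up :: "real \<Rightarrow> 'a::polish_space measure \<Rightarrow> 'b::polish_space measure
                  \<Rightarrow> ('a, 'b) conepair measure \<Rightarrow> bool" where
  "Up p \<mu> \<nu> \<alpha> \<longleftrightarrow> Mplus \<alpha> \<and>
     (\<forall>\<xi>::'a \<Rightarrow> real. continuous_on UNIV \<xi> \<and> bounded (range \<xi>) \<longrightarrow>
        integrable \<alpha> (\<lambda>z. \<xi> (fst (fst z)) * snd (fst z) powr p) \<and>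
        (\<integral>z. \<xi> (fst (fst z)) * snd (fst z) powr p \<partial>\<alpha>) = (\<integral>x. \<xi> x \<partial>\<mu>)) \<and>
     (\<forall>\<zeta>::'b \<Rightarrow> real. continuous_on UNIV \<zeta> \<and> bounded (range \<zeta>) \<longrightarrow>
        integrable \<alpha> (\<lambda>z. \<zeta> (fst (snd z)) * snd (snd z) powr p) \<and>
        (\<integral>z. \<zeta> (fst (snd z)) * snd (snd z) powr p \<partial>\<alpha>) = (\<integral>y. \<zeta> y \<partial>\<nu>))"

definition gw_cost :: "(real \<Rightarrow> ereal) \<Rightarrow> (real \<Rightarrow> real) \<Rightarrow> (real \<Rightarrow> real \<Rightarrow> real) \<Rightarrow> real
     \<Rightarrow> ('a::metric_space, 'b::metric_space) conepair \<Rightarrow> ('a, 'b) conepair \<Rightarrow> ereal" where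
  "gw_cost \<phi> lam \<Delta> p z z' =
     (case z of ((x, r), (y, s)) \<Rightarrow> case z' of ((x', r'), (y', s')) \<Rightarrow>
        Dq \<phi> lam \<Delta> p (dist x x') (r * r') (dist y y') (s * s'))"

(* H(alpha) = \<integral>\<integral> gw_cost d alpha(z) d alpha(z'); the (possibly sign-changing, extended-real)
   integrand is integrated as positive part minus negative part (each an iterated
   nonnegative integral). *)
definition Hfun :: "(real \<Rightarrow> ereal) \<Rightarrow> (real \<Rightarrow> real) \<Rightarrow> (real \<Rightarrow> real \<Rightarrow> real) \<Rightarrow> real
     \<Rightarrow> ('a::metric_space, 'b::metric_space) conepair measure \<Rightarrow> ereal" where
  "Hfun \<phi> lam \<Delta> p \<alpha> =
     enn2ereal (\<integral>\<^sup>+z'. \<integral>\<^sup>+z. e2ennreal (max 0 (gw_cost \<phi> lam \<Delta> p z z')) \<partial>\<alpha> \<partial>\<alpha>)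
   - enn2ereal (\<integral>\<^sup>+z'. \<integral>\<^sup>+z. e2ennreal (max 0 (- gw_cost \<phi> lam \<Delta> p z z')) \<partial>\<alpha> \<partial>\<alpha>)"

definition hdil :: "(('a, 'b) conepair \<Rightarrow> real) \<Rightarrow> ('a, 'b) conepair \<Rightarrow> ('a, 'b) conepair" where
  "hdil v z = (case z of ((x, r), (y, s)) \<Rightarrow> ((x, r / v z), (y, s / v z)))"

definition dil :: "real \<Rightarrow> (('a::polish_space, 'b::polish_space) conepair \<Rightarrow> real)
                   \<Rightarrow> ('a, 'b) conepair measure \<Rightarrow> ('a, 'b) conepair measure" where
  "dil p v \<alpha> = distr (density \<alpha> (\<lambda>z. ennreal (v z powr p))) borel (hdil v)"

end

(* Dilation divides the radii of a pair of cone points by w = v z and reweights by w^p.  The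
   marginal constraints only see r^p d\<alpha>, which is invariant because (r/w)^p w^p = r^p.  The cost
   of two pairs depends on the radii only through H at (r r')^p and (s s')^p, and H is positively
   1-homogeneous (substitute \<theta> \<mapsto> t \<theta> in its infimum); so the cost is multiplied by
   (w w')^(-p), which exactly cancels the density w^p w'^p of the product of the dilated measure with
   itself.  The one technical point is that the dilated measure is again \<sigma>-finite: off the cone tips
   this follows from the finite p-th moments by Markov's inequality, and on the tips the dilation
   map is the identity. *)

theory Submission
  imports Defs
begin

lemma ereal_mult_INF:
  assumes "c > 0"
  shows "ereal c * (INF x\<in>S. f x) = (INF x\<in>S. ereal c * f x)"
  using ereal_Inf_cmult[OF assms, of "\<lambda>y. y \<in> f ` S"] by (simp add: setcompr_eq_image image_image)

lemma ereal_mult_min: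
  assumes "c > 0"
  shows "ereal c * min a b = min (ereal c * a) (ereal c * b)"
  using assms by (intro min_of_mono[symmetric]) (simp add: mono_def ereal_mult_left_mono)

lemma Hc_scale:
  assumes t: "t > 0"
  shows "Hc \<phi> c (t * a) (t * b) = ereal t * Hc \<phi> c a b"
proof -
  have img: "(\<lambda>\<theta>. t * \<theta>) ` {0<..} = ({0<..} :: real set)"
    using t by (auto simp: image_iff intro!: bexI[of _ "x / t" for x])
  have "(INF \<theta>\<in>{0<..}. ereal \<theta> * Lc \<phi> c (t * a / \<theta>) (t * b / \<theta>))
      = (INF \<theta>\<in>(\<lambda>\<theta>. t * \<theta>) ` {0<..}. ereal \<theta> * Lc \<phi> c (t * a / \<theta>) (t * b / \<theta>))"
    unfolding img ..
  also have "\<dots> = (INF \<theta>\<in>{0<..}. ereal (t * \<theta>) * Lc \<phi> c (t * a / (t * \<theta>)) (t * b / (t * \<theta>)))"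
    by (simp only: INF_image comp_def)
  also have "\<dots> = (INF \<theta>\<in>{0<..}. ereal t * (ereal \<theta> * Lc \<phi> c (a / \<theta>) (b / \<theta>)))"
    using t by (intro INF_cong) (simp_all add: mult.assoc flip: times_ereal.simps(1))
  also have "\<dots> = ereal t * (INF \<theta>\<in>{0<..}. ereal \<theta> * Lc \<phi> c (a / \<theta>) (b / \<theta>))"
    using t by (rule ereal_mult_INF[symmetric])
  finally have inf_part: "(INF \<theta>\<in>{0<..}. ereal \<theta> * Lc \<phi> c (t * a / \<theta>) (t * b / \<theta>))
      = ereal t * (INF \<theta>\<in>{0<..}. ereal \<theta> * Lc \<phi> c (a / \<theta>) (b / \<theta>))" .
  have "\<phi> 0 * ereal (t * a + t * b) = ereal t * (\<phi> 0 * ereal (a + b))"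
    by (metis distrib_left mult.left_commute times_ereal.simps(1))
  then show ?thesis
    unfolding Hc_def inf_part using t by (simp add: ereal_mult_min)
qed

lemma hdil_components [simp]:
  "fst (fst (hdil v z)) = fst (fst z)" "snd (fst (hdil v z)) = snd (fst z) / v z"
  "fst (snd (hdil v z)) = fst (snd z)" "snd (snd (hdil v z)) = snd (snd z) / v z"
  by (cases z; auto simp: hdil_def)+

lemma gw_cost_altdef:
  "gw_cost \<phi> lam \<Delta> p z z' = Hc \<phi> (lam (\<Delta> (dist (fst (fst z)) (fst (fst z'))) (dist (fst (snd z)) (fst (snd z')))))
     ((snd (fst z) * snd (fst z')) powr p) ((snd (snd z) * snd (snd z')) powr p)"
  by (simp add: gw_cost_def Dq_def split: prod.split)

lemma gw_cost_hdil:
  fixes z z' :: "('a::metric_space, 'b::metric_space) conepair"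
  assumes "snd (fst z) \<ge> 0" "snd (snd z) \<ge> 0" "snd (fst z') \<ge> 0" "snd (snd z') \<ge> 0"
    and w: "v z > 0" "v z' > 0"
  shows "gw_cost \<phi> lam \<Delta> p (hdil v z) (hdil v z')
       = ereal (inverse (v z powr p * v z' powr p)) * gw_cost \<phi> lam \<Delta> p z z'"
proof -
  define k where "k = inverse (v z powr p * v z' powr p)"
  have k: "k > 0"
    using w by (simp add: k_def)
  have scale: "(a / v z * (a' / v z')) powr p = k * (a * a') powr p"
    if "a \<ge> 0" "a' \<ge> 0" for a a'
    using that w by (simp add: k_def times_divide_times_eq powr_divide powr_mult field_simps)
  show ?thesis
    unfolding gw_cost_altdef hdil_components scale[OF assms(1,3)] scale[OF assms(2,4)] Hc_scale[OF k]
    by (simp add: k_def)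
qed

lemma e2ennreal_max_0_mult:
  assumes "c > 0"
  shows "e2ennreal (max 0 (ereal c * G)) = ennreal c * e2ennreal (max 0 G)"
  using assms
  by (cases G) (auto simp: max_def ennreal_mult_top zero_le_mult_iff zero_ereal_def simp flip: ennreal_mult')

lemma e2ennreal_max_0_rescale:
  assumes "w > 0" "w' > 0" and "G' = ereal (inverse (w * w')) * G"
  shows "ennreal w' * (ennreal w * e2ennreal (max 0 G')) = e2ennreal (max 0 G)"
proof -
  have "ennreal w' * (ennreal w * ennreal (inverse (w * w'))) = 1"
    using assms by (simp flip: ennreal_mult'' add: field_simps)
  then show ?thesis
    using assms by (simp add: e2ennreal_max_0_mult mult.assoc[symmetric])
qed

lemma measurable_cone_coords [measurable]:
  "(\<lambda>z::('a::polish_space, 'b::polish_space) conepair. fst (fst z)) \<in> borel_measurable borel"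
  "(\<lambda>z::('a, 'b) conepair. snd (fst z)) \<in> borel_measurable borel"
  "(\<lambda>z::('a, 'b) conepair. fst (snd z)) \<in> borel_measurable borel"
  "(\<lambda>z::('a, 'b) conepair. snd (snd z)) \<in> borel_measurable borel"
  by (intro borel_measurable_continuous_onI continuous_intros)+

lemma measurable_hdil [measurable]:
  fixes v :: "('a::polish_space, 'b::polish_space) conepair \<Rightarrow> real"
  assumes [measurable]: "v \<in> borel_measurable borel"
  shows "hdil v \<in> borel \<rightarrow>\<^sub>M borel"
proof -
  have "(\<lambda>z. ((fst (fst z), snd (fst z) / v z), (fst (snd z), snd (snd z) / v z)))
      \<in> borel \<rightarrow>\<^sub>M (borel \<Otimes>\<^sub>M borel) \<Otimes>\<^sub>M (borel \<Otimes>\<^sub>M borel)"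
    by measurable
  moreover have "hdil v = (\<lambda>z. ((fst (fst z), snd (fst z) / v z), (fst (snd z), snd (snd z) / v z)))"
    by (simp add: fun_eq_iff prod_eq_iff)
  ultimately show ?thesis
    by (simp add: borel_prod)
qed

lemma sets_dil [simp, measurable_cong]: "sets (dil p v \<alpha>) = sets borel"
  by (simp add: dil_def)

lemma space_dil [simp]: "space (dil p v \<alpha>) = UNIV"
  by (simp add: dil_def)

lemma nn_integral_dil:
  assumes [measurable_cong]: "sets \<alpha> = sets borel"
    and [measurable]: "v \<in> borel_measurable borel" "f \<in> borel_measurable borel"
  shows "(\<integral>\<^sup>+z. f z \<partial>dil p v \<alpha>) = (\<integral>\<^sup>+z. ennreal (v z powr p) * f (hdil v z) \<partial>\<alpha>)"
  unfolding dil_def by (subst nn_integral_distr) (simp_all add: nn_integral_density)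

lemma AE_dil:
  assumes [measurable_cong]: "sets \<alpha> = sets borel"
    and [measurable]: "v \<in> borel_measurable borel" "Measurable.pred borel P"
    and "AE z in \<alpha>. P (hdil v z)"
  shows "AE z in dil p v \<alpha>. P z"
  unfolding dil_def using assms(4) by (auto simp: AE_distr_iff AE_density elim: eventually_mono)

lemma dil_invariant_integral:
  fixes f :: "('a::polish_space, 'b::polish_space) conepair \<Rightarrow> real"
  assumes [measurable_cong]: "sets \<alpha> = sets borel"
    and [measurable]: "v \<in> borel_measurable borel" "f \<in> borel_measurable borel"
    and invariant: "AE z in \<alpha>. v z powr p * f (hdil v z) = f z"
  shows "integrable (dil p v \<alpha>) f \<longleftrightarrow> integrable \<alpha> f"
    and "(\<integral>z. f z \<partial>dil p v \<alpha>) = (\<integral>z. f z \<partial>\<alpha>)"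
proof -
  show "integrable (dil p v \<alpha>) f \<longleftrightarrow> integrable \<alpha> f"
    unfolding dil_def
    by (simp add: integrable_distr_eq integrable_density integrable_cong_AE[OF _ _ invariant])
  show "(\<integral>z. f z \<partial>dil p v \<alpha>) = (\<integral>z. f z \<partial>\<alpha>)"
    unfolding dil_def
    by (simp add: integral_distr integral_density integral_cong_AE[OF _ _ invariant])
qed

lemma emeasure_dil_tip:
  fixes \<alpha> :: "('a::polish_space, 'b::polish_space) conepair measure"
  defines "T \<equiv> {z::('a, 'b) conepair. snd (fst z) = 0 \<and> snd (snd z) = 0}"
  assumes [measurable_cong]: "sets \<alpha> = sets borel"
    and [measurable]: "v \<in> borel_measurable borel" and v_pos: "\<And>z. v z > 0"
    and [measurable]: "B \<in> sets borel"
  shows "emeasure (dil p v \<alpha>) (T \<inter> B) = emeasure (density \<alpha> (\<lambda>z. ennreal (v z powr p))) (T \<inter> B)"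
proof -
  have fixed: "hdil v -` (T \<inter> B) = T \<inter> B"
  proof (intro set_eqI iffI)
    fix z assume "z \<in> hdil v -` (T \<inter> B)"
    moreover from this have "z \<in> T"
      using v_pos[of z] by (simp add: T_def)
    moreover from this have "hdil v z = z"
      by (simp add: T_def prod_eq_iff)
    ultimately show "z \<in> T \<inter> B"
      by simp
  next
    fix z assume "z \<in> T \<inter> B"
    moreover from this have "hdil v z = z"
      by (simp add: T_def prod_eq_iff)
    ultimately show "z \<in> hdil v -` (T \<inter> B)"
      by simp
  qed
  have "T \<in> sets borel"
    unfolding T_def by measurable
  moreover have "space \<alpha> = UNIV"
    using sets_eq_imp_space_eq[OF \<open>sets \<alpha> = sets borel\<close>] by simp
  moreover have "hdil v \<in> density \<alpha> (\<lambda>z. ennreal (v z powr p)) \<rightarrow>\<^sub>M borel"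
    by simp
  ultimately show ?thesis
    unfolding dil_def by (simp add: emeasure_distr fixed del: vimage_Int)
qed

lemma UN_inverse_Suc_le_eq: "(\<Union>n. {x. inverse (real (Suc n)) \<le> f x}) = {x. 0 < f x}"
proof (intro set_eqI iffI)
  fix x assume "x \<in> {x. 0 < f x}"
  then obtain n where "inverse (real (Suc n)) < f x"
    using reals_Archimedean by auto
  then show "x \<in> (\<Union>n. {x. inverse (real (Suc n)) \<le> f x})"
    by (auto intro: less_imp_le)
qed (auto intro: less_le_trans[rotated])

lemma emeasure_level_set_finite:
  fixes u :: "'a \<Rightarrow> real"
  assumes "integrable M u" "\<And>x. u x \<ge> 0" "c > 0"
  shows "emeasure M {x \<in> space M. c \<le> u x} \<noteq> \<infinity>"
proof -
  have "emeasure M {x \<in> space M. c \<le> u x} \<le> ennreal (1 / c * (\<integral>x. u x \<partial>M))"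
    using assms by (intro integral_Markov_inequality) auto
  then show ?thesis
    by (auto simp: top_unique)
qed

lemma sigma_finite_dil:
  fixes \<alpha> :: "('a::polish_space, 'b::polish_space) conepair measure"
  assumes sets_\<alpha> [measurable_cong]: "sets \<alpha> = sets borel" and "sigma_finite_measure \<alpha>"
    and [measurable]: "v \<in> borel_measurable borel" and v_pos: "\<And>z. v z > 0"
    and moments: "integrable (dil p v \<alpha>) (\<lambda>z. snd (fst z) powr p)"
      "integrable (dil p v \<alpha>) (\<lambda>z. snd (snd z) powr p)"
  shows "sigma_finite_measure (dil p v \<alpha>)"
proof -
  define D where "D = density \<alpha> (\<lambda>z. ennreal (v z powr p))"
  define T where "T = {z::('a, 'b) conepair. snd (fst z) = 0 \<and> snd (snd z) = 0}"
  define level where "level u n = {z::('a, 'b) conepair. inverse (real (Suc n)) \<le> u z}" for u n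
  have "sigma_finite_measure D"
    unfolding D_def using \<open>sigma_finite_measure \<alpha>\<close>
    by (simp add: sigma_finite_measure.sigma_finite_iff_density_finite)
  then obtain E :: "nat \<Rightarrow> ('a, 'b) conepair set"
    where E: "range E \<subseteq> sets D" "(\<Union>k. E k) = space D" "\<And>k. emeasure D (E k) \<noteq> \<infinity>"
    by (rule sigma_finite_measure.sigma_finite) blast
  have tip_finite: "emeasure (dil p v \<alpha>) (T \<inter> E k) \<noteq> \<infinity>" for k
  proof -
    have "E k \<in> sets borel"
      using E(1) sets_\<alpha> by (auto simp: D_def)
    then have "emeasure (dil p v \<alpha>) (T \<inter> E k) = emeasure D (T \<inter> E k)"
      unfolding D_def T_def using sets_\<alpha> v_pos by (intro emeasure_dil_tip) simp_all
    also have "\<dots> \<le> emeasure D (E k)"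
      using E(1) by (intro emeasure_mono) auto
    finally show ?thesis
      using E(3)[of k] by (auto simp: top_unique)
  qed
  define A where "A = range (level (\<lambda>z. snd (fst z) powr p)) \<union> range (level (\<lambda>z. snd (snd z) powr p))
    \<union> range (\<lambda>k. T \<inter> E k)"
  \<comment> \<open>\<open>r powr p > 0\<close> for every \<open>r \<noteq> 0\<close> (negative \<open>r\<close> included), so the level sets of the two
    moments cover everything off the tip \<open>T\<close>.\<close>
  have "\<Union>A = {z. snd (fst z) powr p > 0} \<union> {z. snd (snd z) powr p > 0} \<union> T \<inter> (\<Union>k. E k)"
    unfolding A_def level_def UN_inverse_Suc_le_eq[symmetric] by blast
  also have "\<dots> = space (dil p v \<alpha>)"
    using E(2) sets_eq_imp_space_eq[OF sets_\<alpha>] by (auto simp: D_def T_def)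
  finally have "\<Union>A = space (dil p v \<alpha>)" .
  moreover have "A \<subseteq> sets (dil p v \<alpha>)"
    using E(1) by (auto simp: A_def D_def T_def level_def)
  moreover have "\<forall>a\<in>A. emeasure (dil p v \<alpha>) a \<noteq> \<infinity>"
    using emeasure_level_set_finite[OF moments(1)] emeasure_level_set_finite[OF moments(2)] tip_finite
    by (auto simp: A_def level_def)
  moreover have "countable A"
    unfolding A_def by (intro countable_Un countable_image) simp_all
  ultimately show ?thesis
    unfolding sigma_finite_measure_def by blast
qed

lemma nn_integral_nn_integral_dil:
  fixes \<alpha> :: "('a::polish_space, 'b::polish_space) conepair measure"
    and F :: "('a, 'b) conepair \<Rightarrow> ('a, 'b) conepair \<Rightarrow> ennreal"
  assumes sets_\<alpha> [measurable_cong]: "sets \<alpha> = sets borel"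
    and v_meas [measurable]: "v \<in> borel_measurable borel"
    and "sigma_finite_measure (dil p v \<alpha>)"
    and F_meas [measurable]: "(\<lambda>zz. F (fst zz) (snd zz)) \<in> borel_measurable (borel \<Otimes>\<^sub>M borel)"
  shows "(\<integral>\<^sup>+z'. \<integral>\<^sup>+z. F z z' \<partial>dil p v \<alpha> \<partial>dil p v \<alpha>)
       = (\<integral>\<^sup>+z'. \<integral>\<^sup>+z. ennreal (v z' powr p) * (ennreal (v z powr p) * F (hdil v z) (hdil v z')) \<partial>\<alpha> \<partial>\<alpha>)"
proof -
  interpret M: sigma_finite_measure "dil p v \<alpha>" by fact
  have section_meas [measurable]: "(\<lambda>z. F z c) \<in> borel_measurable borel" for c
  proof -
    have "(\<lambda>z. (z, c)) \<in> borel \<rightarrow>\<^sub>M borel \<Otimes>\<^sub>M borel"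
      by measurable
    from measurable_compose[OF this F_meas] show ?thesis
      by simp
  qed
  have "(\<lambda>x. (snd x, fst x)) \<in> borel \<Otimes>\<^sub>M dil p v \<alpha> \<rightarrow>\<^sub>M borel \<Otimes>\<^sub>M borel"
    by measurable
  from measurable_compose[OF this F_meas]
  have "(\<lambda>x. F (snd x) (fst x)) \<in> borel_measurable (borel \<Otimes>\<^sub>M dil p v \<alpha>)"
    by simp
  then have inner_meas [measurable]: "(\<lambda>z'. \<integral>\<^sup>+z. F z z' \<partial>dil p v \<alpha>) \<in> borel_measurable borel"
    using M.borel_measurable_nn_integral[of "\<lambda>z' z. F z z'" borel] by (simp add: case_prod_beta')
  have inner: "(\<integral>\<^sup>+z. F z c \<partial>dil p v \<alpha>) = (\<integral>\<^sup>+z. ennreal (v z powr p) * F (hdil v z) c \<partial>\<alpha>)" for c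
    using sets_\<alpha> by (rule nn_integral_dil) simp_all
  have "(\<integral>\<^sup>+z'. \<integral>\<^sup>+z. F z z' \<partial>dil p v \<alpha> \<partial>dil p v \<alpha>)
      = (\<integral>\<^sup>+z'. ennreal (v z' powr p) * (\<integral>\<^sup>+z. F z (hdil v z') \<partial>dil p v \<alpha>) \<partial>\<alpha>)"
    using sets_\<alpha> v_meas inner_meas by (rule nn_integral_dil)
  then show ?thesis
    by (simp add: inner nn_integral_cmult)
qed

lemma nn_integral_nn_integral_dil_homogeneous:
  fixes \<alpha> :: "('a::polish_space, 'b::polish_space) conepair measure"
    and G :: "('a, 'b) conepair \<Rightarrow> ('a, 'b) conepair \<Rightarrow> ereal"
  assumes sets_\<alpha>: "sets \<alpha> = sets borel"
    and v_meas [measurable]: "v \<in> borel_measurable borel" and v_pos: "\<And>z. v z > 0"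
    and "sigma_finite_measure (dil p v \<alpha>)"
    and G_meas [measurable]: "(\<lambda>zz. G (fst zz) (snd zz)) \<in> borel_measurable (borel \<Otimes>\<^sub>M borel)"
    and cone: "AE z in \<alpha>. snd (fst z) \<ge> 0 \<and> snd (snd z) \<ge> 0"
    and G_hdil: "\<And>z z'. snd (fst z) \<ge> 0 \<Longrightarrow> snd (snd z) \<ge> 0 \<Longrightarrow> snd (fst z') \<ge> 0 \<Longrightarrow> snd (snd z') \<ge> 0
      \<Longrightarrow> G (hdil v z) (hdil v z') = ereal (inverse (v z powr p * v z' powr p)) * G z z'"
  shows "(\<integral>\<^sup>+z'. \<integral>\<^sup>+z. e2ennreal (max 0 (G z z')) \<partial>dil p v \<alpha> \<partial>dil p v \<alpha>)
       = (\<integral>\<^sup>+z'. \<integral>\<^sup>+z. e2ennreal (max 0 (G z z')) \<partial>\<alpha> \<partial>\<alpha>)"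
proof -
  have "(\<lambda>zz. e2ennreal (max 0 (G (fst zz) (snd zz)))) \<in> borel_measurable (borel \<Otimes>\<^sub>M borel)"
    by measurable
  with sets_\<alpha> v_meas \<open>sigma_finite_measure (dil p v \<alpha>)\<close> have "(\<integral>\<^sup>+z'. \<integral>\<^sup>+z. e2ennreal (max 0 (G z z')) \<partial>dil p v \<alpha> \<partial>dil p v \<alpha>)
      = (\<integral>\<^sup>+z'. \<integral>\<^sup>+z. ennreal (v z' powr p) * (ennreal (v z powr p) * e2ennreal (max 0 (G (hdil v z) (hdil v z'))))
          \<partial>\<alpha> \<partial>\<alpha>)"
    by (rule nn_integral_nn_integral_dil)
  also have "\<dots> = (\<integral>\<^sup>+z'. \<integral>\<^sup>+z. e2ennreal (max 0 (G z z')) \<partial>\<alpha> \<partial>\<alpha>)"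
    using cone
  proof (intro nn_integral_cong_AE, eventually_elim)
    case (elim z')
    show ?case
      using cone
    proof (intro nn_integral_cong_AE, eventually_elim)
      case (elim z)
      with \<open>snd (fst z') \<ge> 0 \<and> snd (snd z') \<ge> 0\<close>
      have "G (hdil v z) (hdil v z') = ereal (inverse (v z powr p * v z' powr p)) * G z z'"
        by (intro G_hdil) auto
      then show ?case
        by (rule e2ennreal_max_0_rescale[rotated 2]) (use v_pos[of z] v_pos[of z'] in auto)
    qed
  qed
  finally show ?thesis .
qed

lemma dil_moment_integral:
  fixes \<alpha> :: "('a::polish_space, 'b::polish_space) conepair measure"
    and g :: "('a, 'b) conepair \<Rightarrow> 'c::topological_space" and \<rho> :: "('a, 'b) conepair \<Rightarrow> real"
  assumes sets_\<alpha>: "sets \<alpha> = sets borel"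
    and v_meas: "v \<in> borel_measurable borel" and v_pos: "\<And>z. v z > 0"
    and [measurable]: "g \<in> borel_measurable borel" "\<rho> \<in> borel_measurable borel" "\<xi> \<in> borel_measurable borel"
    and g_hdil: "\<And>z. g (hdil v z) = g z" and \<rho>_hdil: "\<And>z. \<rho> (hdil v z) = \<rho> z / v z"
    and \<rho>_nonneg: "AE z in \<alpha>. \<rho> z \<ge> 0"
  shows "integrable (dil p v \<alpha>) (\<lambda>z. \<xi> (g z) * \<rho> z powr p) \<longleftrightarrow> integrable \<alpha> (\<lambda>z. \<xi> (g z) * \<rho> z powr p)"
    and "(\<integral>z. \<xi> (g z) * \<rho> z powr p \<partial>dil p v \<alpha>) = (\<integral>z. \<xi> (g z) * \<rho> z powr p \<partial>\<alpha>)"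
proof -
  have "AE z in \<alpha>. v z powr p * (\<xi> (g (hdil v z)) * \<rho> (hdil v z) powr p) = \<xi> (g z) * \<rho> z powr p"
    using \<rho>_nonneg by (rule eventually_mono) (simp add: g_hdil \<rho>_hdil powr_divide less_imp_le v_pos
        v_pos[THEN dual_order.strict_implies_not_eq])
  with sets_\<alpha> v_meas show "integrable (dil p v \<alpha>) (\<lambda>z. \<xi> (g z) * \<rho> z powr p) \<longleftrightarrow> integrable \<alpha> (\<lambda>z. \<xi> (g z) * \<rho> z powr p)"
    and "(\<integral>z. \<xi> (g z) * \<rho> z powr p \<partial>dil p v \<alpha>) = (\<integral>z. \<xi> (g z) * \<rho> z powr p \<partial>\<alpha>)"
    by (intro dil_invariant_integral; measurable)+
qed

lemma Mplus_dil:
  fixes \<alpha> :: "('a::polish_space, 'b::polish_space) conepair measure"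
  assumes "Mplus \<alpha>"
    and v_meas: "v \<in> borel_measurable borel" and v_pos: "\<And>z. v z > 0"
    and "integrable (dil p v \<alpha>) (\<lambda>z. snd (fst z) powr p)" "integrable (dil p v \<alpha>) (\<lambda>z. snd (snd z) powr p)"
  shows "Mplus (dil p v \<alpha>)"
proof -
  have sets_\<alpha>: "sets \<alpha> = sets borel" and "sigma_finite_measure \<alpha>"
    and cone: "AE z in \<alpha>. snd (fst z) \<ge> 0 \<and> snd (snd z) \<ge> 0"
    using \<open>Mplus \<alpha>\<close> by (auto simp: Mplus_def)
  from sets_\<alpha> this(2) v_meas v_pos assms(4,5) have "sigma_finite_measure (dil p v \<alpha>)"
    by (rule sigma_finite_dil)
  moreover have "AE z in dil p v \<alpha>. snd (fst z) \<ge> 0 \<and> snd (snd z) \<ge> 0"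
    using sets_\<alpha> v_meas
  proof (rule AE_dil)
    show "AE z in \<alpha>. snd (fst (hdil v z)) \<ge> 0 \<and> snd (snd (hdil v z)) \<ge> 0"
      using cone by (rule eventually_mono) (simp add: v_pos less_imp_le)
  qed simp
  ultimately show ?thesis
    by (simp add: Mplus_def)
qed

lemma Up_dil:
  fixes \<alpha> :: "('a::polish_space, 'b::polish_space) conepair measure"
  assumes Up: "Up p \<mu> \<nu> \<alpha>"
    and v_meas: "v \<in> borel_measurable borel" and v_pos: "\<And>z. v z > 0"
  shows "Up p \<mu> \<nu> (dil p v \<alpha>)"
proof -
  have sets_\<alpha>: "sets \<alpha> = sets borel" and "AE z in \<alpha>. snd (fst z) \<ge> 0" "AE z in \<alpha>. snd (snd z) \<ge> 0"
    using Up by (auto simp: Up_def Mplus_def)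
  note moment = dil_moment_integral[OF sets_\<alpha> v_meas v_pos]
  note marginal_x = moment[of "\<lambda>z. fst (fst z)" "\<lambda>z. snd (fst z)", OF _ _ borel_measurable_continuous_onI _ _ \<open>AE z in \<alpha>. snd (fst z) \<ge> 0\<close>]
  note marginal_y = moment[of "\<lambda>z. fst (snd z)" "\<lambda>z. snd (snd z)", OF _ _ borel_measurable_continuous_onI _ _ \<open>AE z in \<alpha>. snd (snd z) \<ge> 0\<close>]
  have "integrable (dil p v \<alpha>) (\<lambda>z. snd (fst z) powr p)" "integrable (dil p v \<alpha>) (\<lambda>z. snd (snd z) powr p)"
    using Up marginal_x(1)[of "\<lambda>_. 1"] marginal_y(1)[of "\<lambda>_. 1"] unfolding Up_def
    by (auto dest!: spec[of _ "\<lambda>_. 1"])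
  with Up v_meas v_pos have "Mplus (dil p v \<alpha>)"
    by (intro Mplus_dil) (simp_all add: Up_def)
  then show ?thesis
    using Up marginal_x marginal_y unfolding Up_def by simp
qed

lemma Hfun_dil:
  fixes \<alpha> :: "('a::polish_space, 'b::polish_space) conepair measure"
  assumes "Mplus \<alpha>" and sigma_finite: "sigma_finite_measure (dil p v \<alpha>)"
    and cost_meas [measurable]: "(\<lambda>zz::('a, 'b) conepair \<times> ('a, 'b) conepair. gw_cost \<phi> lam \<Delta> p (fst zz) (snd zz))
      \<in> borel_measurable (borel \<Otimes>\<^sub>M borel)"
    and v_meas: "v \<in> borel_measurable borel" and v_pos: "\<And>z. v z > 0"
  shows "Hfun \<phi> lam \<Delta> p (dil p v \<alpha>) = Hfun \<phi> lam \<Delta> p \<alpha>"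
proof -
  have sets_\<alpha>: "sets \<alpha> = sets borel" and cone: "AE z in \<alpha>. snd (fst z) \<ge> 0 \<and> snd (snd z) \<ge> 0"
    using \<open>Mplus \<alpha>\<close> by (auto simp: Mplus_def)
  note homogeneous = nn_integral_nn_integral_dil_homogeneous[OF sets_\<alpha> v_meas v_pos sigma_finite _ cone]
  have "(\<integral>\<^sup>+z'. \<integral>\<^sup>+z. e2ennreal (max 0 (- gw_cost \<phi> lam \<Delta> p z z')) \<partial>dil p v \<alpha> \<partial>dil p v \<alpha>)
      = (\<integral>\<^sup>+z'. \<integral>\<^sup>+z. e2ennreal (max 0 (- gw_cost \<phi> lam \<Delta> p z z')) \<partial>\<alpha> \<partial>\<alpha>)"
    by (rule homogeneous) (simp_all add: gw_cost_hdil v_pos)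
  moreover have "(\<integral>\<^sup>+z'. \<integral>\<^sup>+z. e2ennreal (max 0 (gw_cost \<phi> lam \<Delta> p z z')) \<partial>dil p v \<alpha> \<partial>dil p v \<alpha>)
      = (\<integral>\<^sup>+z'. \<integral>\<^sup>+z. e2ennreal (max 0 (gw_cost \<phi> lam \<Delta> p z z')) \<partial>\<alpha> \<partial>\<alpha>)"
    by (rule homogeneous) (simp_all add: gw_cost_hdil v_pos)
  ultimately show ?thesis
    unfolding Hfun_def by simp
qed

theorem lemma2:
  fixes \<mu> :: "'a::polish_space measure" and \<nu> :: "'b::polish_space measure"
    and \<phi> :: "real \<Rightarrow> ereal" and lam :: "real \<Rightarrow> real" and \<Delta> :: "real \<Rightarrow> real \<Rightarrow> real"
    and p q :: real
    and \<alpha> :: "('a, 'b) conepair measure" and v :: "('a, 'b) conepair \<Rightarrow> real"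
  assumes "mm_measure \<mu>" and "mm_measure \<nu>"
    and "entropy \<phi>" and "distance_on {0..} \<Delta>" and "p > 0" and "q > 0"
    and cost_meas: "(\<lambda>zz::(('a, 'b) conepair \<times> ('a, 'b) conepair). gw_cost \<phi> lam \<Delta> p (fst zz) (snd zz))
                      \<in> borel_measurable (borel \<Otimes>\<^sub>M borel)"
    and "Up p \<mu> \<nu> \<alpha>"
    and "v \<in> borel_measurable borel" and "\<forall>z. v z > 0"
  shows "Up p \<mu> \<nu> (dil p v \<alpha>) \<and> Hfun \<phi> lam \<Delta> p (dil p v \<alpha>) = Hfun \<phi> lam \<Delta> p \<alpha>"
proof -
  have "Up p \<mu> \<nu> (dil p v \<alpha>)"
    using \<open>Up p \<mu> \<nu> \<alpha>\<close> \<open>v \<in> borel_measurable borel\<close> by (rule Up_dil) (use \<open>\<forall>z. v z > 0\<close> in blast)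
  moreover from this have "Hfun \<phi> lam \<Delta> p (dil p v \<alpha>) = Hfun \<phi> lam \<Delta> p \<alpha>"
    using \<open>Up p \<mu> \<nu> \<alpha>\<close> cost_meas \<open>v \<in> borel_measurable borel\<close> \<open>\<forall>z. v z > 0\<close>
    by (intro Hfun_dil) (auto simp: Up_def Mplus_def)
  ultimately show ?thesis ..
qed

end
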